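(* Let $\mathcal{T}_0$ be a triangulation of a finite point set $\mathcal{P}$ in the plane and let $F=\langle f_1,\ldots,f_r\rangle$ be a valid sequence of flips with $\mathcal{T}_0 \xrightarrow{F} \mathcal{T}_r$. For any ordering $(C_1,\ldots,C_\ell)$ of the (weakly connected) components of $\mathcal{D}_F$, there is a permutation $\pi(F)$ of the flips in $F$ such that $\mathcal{T}_0 \xrightarrow{\pi(F)} \mathcal{T}_r$ and such that for any flips $f_i\in C_t$ and $f_j\in C_s$ with $1\le t<s\le \ell$, $f_i$ appears before $f_j$ in $\pi(F)$. That is, the flips of each component appear as a consecutive block in $\pi(F)$, and the blocks appear in the given order of their components.
   Context: A triangulation of a finite point set $\mathcal{P}$ in the plane is a partition of the convex hull of $\mathcal{P}$ into triangles whose vertex set is $\mathcal{P}$. For an interior edge $e$ of a triangulation $\mathcal{T}$, the quadrilateral associated with $e$ is the union of the two triangles of $\mathcal{T}$ sharing $e$. A flip $f$ with underlying edge $\epsilon(f)=e$ is admissible in $\mathcal{T}$ if $e\in\mathcal{T}$ and its associated quadrilateral is convex; performing it replaces $e$ by the other diagonal $\phi(f)$ of that quadrilateral. Two distinct edges share a triangle in $\mathcal{T}$ if they are edges of the same triangle of $\mathcal{T}$. A sequence $F=\langle f_1,\ldots,f_r\rangle$ is valid with respect to $\mathcal{T}$ if there are triangulations $\mathcal{T}_0=\mathcal{T},\mathcal{T}_1,\ldots,\mathcal{T}_r$ such that $f_i$ is admissible in $\mathcal{T}_{i-1}$ and performing it yields $\mathcal{T}_i$; then we write $\mathcal{T}\xrightarrow{F}\mathcal{T}_r$.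 Flips in a sequence are distinct objects even if they have the same underlying edge. For $1\le i<j\le r$, flip $f_j$ is adjacent to $f_i$ (written $f_i\to f_j$) if (1) either $\phi(f_i)=\epsilon(f_j)$ or $\phi(f_i)$ and $\epsilon(f_j)$ share a triangle in $\mathcal{T}_{j-1}$, and (2) there is no $p$ with $i<p<j$ and $\epsilon(f_p)=\phi(f_i)$. $\mathcal{D}_F$ is the directed acyclic graph whose nodes are the flips of $F$ and whose arcs are the pairs $f_i\to f_j$. A component of a directed graph means a weakly connected component (connected component of the underlying undirected graph). *)

theory Defs
  imports "HOL-Analysis.Analysis"
begin

type_synonym pt = "real \<times> real"
type_synonym edge = "pt set"
type_synonym triangle = "pt set"
(* a flip is the pair (underlying edge eps(f), new diagonal phi(f)) *)
type_synonym flip = "edge \<times> edge"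

definition eps :: "flip \<Rightarrow> edge" where "eps f = fst f"
definition phi :: "flip \<Rightarrow> edge" where "phi f = snd f"

definition is_triangle :: "pt set \<Rightarrow> triangle \<Rightarrow> bool" where
  "is_triangle P t \<longleftrightarrow> t \<subseteq> P \<and> card t = 3 \<and> \<not> collinear t"

definition triangulation :: "pt set \<Rightarrow> triangle set \<Rightarrow> bool" where
  "triangulation P T \<longleftrightarrow> finite P \<and> finite T \<and>
     (\<forall>t\<in>T. is_triangle P t) \<and>
     (\<Union>t\<in>T. convex hull t) = convex hull P \<and>
     (\<forall>t1\<in>T. \<forall>t2\<in>T. t1 \<noteq> t2 \<longrightarrow> convex hull t1 \<inter> convex hull t2 = convex hull (t1 \<inter> t2)) \<and>
     \<Union>T = P"

definition edges :: "triangle set \<Rightarrow> edge set" where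
  "edges T = {e. card e = 2 \<and> (\<exists>t\<in>T. e \<subseteq> t)}"

definition share_triangle :: "triangle set \<Rightarrow> edge \<Rightarrow> edge \<Rightarrow> bool" where
  "share_triangle T e1 e2 \<longleftrightarrow> e1 \<noteq> e2 \<and> card e1 = 2 \<and> card e2 = 2 \<and> (\<exists>t\<in>T. e1 \<subseteq> t \<and> e2 \<subseteq> t)"

(* f admissible in T: eps f is an (interior) edge of T, shared by two triangles t1, t2 whose
   union (the associated quadrilateral) is convex; phi f is the other diagonal *)
definition admissible :: "triangle set \<Rightarrow> flip \<Rightarrow> bool" where
  "admissible T f \<longleftrightarrow> eps f \<in> edges T \<and>
     (\<exists>t1\<in>T. \<exists>t2\<in>T. t1 \<noteq> t2 \<and> eps f \<subseteq> t1 \<and> eps f \<subseteq> t2 \<and>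
        convex (convex hull t1 \<union> convex hull t2) \<and>
        phi f = (t1 \<union> t2) - eps f)"

(* result of performing f in T: the two triangles containing eps f are replaced by the two
   triangles containing phi f *)
definition perform :: "triangle set \<Rightarrow> flip \<Rightarrow> triangle set" where
  "perform T f = (T - {t\<in>T. eps f \<subseteq> t}) \<union> ((\<lambda>a. insert a (phi f)) ` eps f)"

definition tri_after :: "triangle set \<Rightarrow> flip list \<Rightarrow> nat \<Rightarrow> triangle set" where
  "tri_after T F i = foldl perform T (take i F)"

definition valid_seq :: "pt set \<Rightarrow> triangle set \<Rightarrow> flip list \<Rightarrow> bool" where
  "valid_seq P T F \<longleftrightarrow> triangulation P T \<and>
     (\<forall>i<length F. admissible (tri_after T F i) (F ! i) \<and>
                    triangulation P (tri_after T F (Suc i)))"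

(* adjacency f_i -> f_j in D_F, with 0-based indices (the triangulation before flip j is
   tri_after T F j, i.e. T_{j-1} in 1-based notation) *)
definition adj :: "triangle set \<Rightarrow> flip list \<Rightarrow> nat \<Rightarrow> nat \<Rightarrow> bool" where
  "adj T F i j \<longleftrightarrow> i < j \<and> j < length F \<and>
     (phi (F ! i) = eps (F ! j) \<or> share_triangle (tri_after T F j) (phi (F ! i)) (eps (F ! j))) \<and>
     \<not> (\<exists>p. i < p \<and> p < j \<and> eps (F ! p) = phi (F ! i))"

definition DF_arcs :: "triangle set \<Rightarrow> flip list \<Rightarrow> (nat \<times> nat) set" where
  "DF_arcs T F = {(i, j). adj T F i j}"

definition DF_components :: "triangle set \<Rightarrow> flip list \<Rightarrow> nat set set" where
  "DF_components T F = {..<length F} // ((DF_arcs T F \<union> (DF_arcs T F)\<inverse>)\<^sup>*)"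

end

theory Submission
  imports Defs "HOL-Combinatorics.Transposition"
begin

text \<open>If flip \<open>f\<^sub>j\<close> flips an edge of a triangle created by \<open>f\<^sub>i\<close> and not destroyed in
  between, then \<open>f\<^sub>i \<rightarrow> f\<^sub>j\<close> in \<open>D\<^sub>F\<close>. So two consecutive flips from different components
  are independent in this sense, and independent consecutive flips commute: the second one was
  already admissible before the first, performing it first keeps the first admissible, and both
  orders end in the same triangulation. The geometric input is that flipping the diagonal \<open>ab\<close>
  of a convex quadrilateral \<open>acbd\<close> yields a triangulation again, and that no triangle other than
  \<open>abc\<close>, \<open>abd\<close> contains \<open>a\<close> and \<open>b\<close> and none contains \<open>c\<close> and \<open>d\<close>. Bubble sort by
  component index then reorders \<open>F\<close> through such swaps; each swap makes the sequence of
  component indices lexicographically smaller, so the process terminates.\<close>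

lemma noncollinear_lincomb_eq_0:
  fixes a b c :: "'a::real_vector"
  assumes nc: "\<not> collinear {a,b,c}" and eq: "s *\<^sub>R (b - a) + t *\<^sub>R (c - a) = 0"
  shows "s = 0 \<and> t = 0"
proof (rule ccontr)
  assume st: "\<not> (s = 0 \<and> t = 0)"
  show False
  proof (cases "s = 0")
    case True
    then have "c = a" using st eq by simp
    then show False using nc by (simp add: collinear_3_expand)
  next
    case False
    have "s *\<^sub>R (b - a) = - (t *\<^sub>R (c - a))" using eq by (simp add: eq_neg_iff_add_eq_0)
    then have "(1/s) *\<^sub>R (s *\<^sub>R (b - a)) = (1/s) *\<^sub>R (- (t *\<^sub>R (c - a)))" by simp
    then have "b - a = (- t/s) *\<^sub>R (c - a)" using False by simp
    then have "b = (1 + t/s) *\<^sub>R a + (1 - (1 + t/s)) *\<^sub>R c" by (simp add: algebra_simps)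
    then have "collinear {a,b,c}" unfolding collinear_3_expand by blast
    then show False using nc by simp
  qed
qed

lemma noncollinear_barycentric_unique:
  fixes a b c :: "'a::real_vector"
  assumes nc: "\<not> collinear {a,b,c}"
    and sum: "x1 + y1 + z1 = x2 + y2 + z2"
    and eq: "x1 *\<^sub>R a + y1 *\<^sub>R b + z1 *\<^sub>R c = x2 *\<^sub>R a + y2 *\<^sub>R b + z2 *\<^sub>R c"
  shows "x1 = x2 \<and> y1 = y2 \<and> z1 = z2"
proof -
  have "(y1 - y2) *\<^sub>R (b - a) + (z1 - z2) *\<^sub>R (c - a)
      = (x1 *\<^sub>R a + y1 *\<^sub>R b + z1 *\<^sub>R c) - (x2 *\<^sub>R a + y2 *\<^sub>R b + z2 *\<^sub>R c)
        - ((x1 + y1 + z1) - (x2 + y2 + z2)) *\<^sub>R a"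
    by (simp add: algebra_simps)
  then have "(y1 - y2) *\<^sub>R (b - a) + (z1 - z2) *\<^sub>R (c - a) = 0" using sum eq by simp
  from noncollinear_lincomb_eq_0[OF nc this] sum show ?thesis by simp
qed

lemma noncollinear_barycentricE:
  fixes a b c z :: pt
  assumes nc: "\<not> collinear {a,b,c}"
  obtains x y w where "x + y + w = 1" "z = x *\<^sub>R a + y *\<^sub>R b + w *\<^sub>R c"
proof -
  have indep: "a \<noteq> b" "a \<noteq> c" "b \<noteq> c" "\<not> affine_dependent {a,b,c}"
    using nc collinear_3_eq_affine_dependent by blast+
  then have "aff_dim {a,b,c} = 2" using aff_dim_affine_independent[OF indep(4)] by simp
  then have "affine hull {a,b,c} = UNIV" using aff_dim_eq_full[where 'n = pt] by simp
  then show ?thesis using that unfolding affine_hull_3 by blast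
qed

lemma convex_hull_3E:
  assumes "z \<in> convex hull {a,b,c}"
  obtains u v w where "0 \<le> u" "0 \<le> v" "0 \<le> w" "u + v + w = 1"
    "z = u *\<^sub>R a + v *\<^sub>R b + w *\<^sub>R c"
  using assms unfolding convex_hull_3 by blast

lemma convex_hull_3I:
  assumes "0 \<le> u" "0 \<le> v" "0 \<le> w" "u + v + w = 1"
  shows "u *\<^sub>R a + v *\<^sub>R b + w *\<^sub>R c \<in> convex hull {a,b,c}"
  using assms unfolding convex_hull_3 by blast

lemma open_segmentE:
  assumes "m \<in> open_segment a b"
  obtains u where "0 < u" "u < 1" "m = (1 - u) *\<^sub>R a + u *\<^sub>R b"
  using assms unfolding in_segment by blast

lemma closed_segmentE:
  assumes "z \<in> closed_segment a b"
  obtains s where "0 \<le> s" "s \<le> 1" "z = (1 - s) *\<^sub>R a + s *\<^sub>R b"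
  using assms unfolding in_segment by blast

lemma closed_segmentI:
  assumes "0 \<le> s" "s \<le> 1"
  shows "(1 - s) *\<^sub>R a + s *\<^sub>R b \<in> closed_segment a b"
  using assms unfolding in_segment by blast

lemma convex_hull_3_subset:
  assumes "x \<in> convex hull S" "y \<in> convex hull S" "w \<in> convex hull S"
  shows "convex hull {x,y,w} \<subseteq> convex hull S"
  by (rule hull_minimal) (use assms convex_convex_hull in auto)

lemma closed_segment_subset_convex_hull_3: "closed_segment a b \<subseteq> convex hull {a,b,c}"
  unfolding segment_convex_hull by (rule hull_mono) auto

lemma convex_hull_3_split:
  fixes a b c m :: "'a::euclidean_space"
  assumes "m \<in> closed_segment a b"
  shows "convex hull {a,b,c} \<subseteq> convex hull {a,m,c} \<union> convex hull {m,b,c}"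
proof
  fix z assume "z \<in> convex hull {a,b,c}"
  then have "z \<in> convex hull (insert c {a,b})" by (simp add: insert_commute)
  then obtain x where x: "x \<in> convex hull {a,b}" "z \<in> closed_segment c x"
    unfolding convex_hull_insert_segments by auto
  have "x \<in> closed_segment a m \<union> closed_segment m b"
    using x(1) Un_closed_segment[OF assms] by (simp add: segment_convex_hull)
  moreover have "closed_segment c x \<subseteq> convex hull {p,q,c}" if "x \<in> closed_segment p q" for p q
    using that closed_segment_subset_convex_hull_3[of p q c]
    by (intro closed_segment_subset) (auto simp: hull_inc)
  ultimately show "z \<in> convex hull {a,m,c} \<union> convex hull {m,b,c}" using x(2) by blast
qed

lemma convex_hull_3_split_inter:
  fixes a b c m :: "'a::real_vector"
  assumes nc: "\<not> collinear {a,b,c}" and m: "m \<in> open_segment a b"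
    and z1: "z \<in> convex hull {a,m,c}" and z2: "z \<in> convex hull {m,b,c}"
  shows "z \<in> closed_segment c m"
proof -
  obtain u where u: "0 < u" "u < 1" "m = (1 - u) *\<^sub>R a + u *\<^sub>R b"
    using m open_segmentE by blast
  obtain l1 n1 k1 where h1: "0 \<le> l1" "0 \<le> n1" "0 \<le> k1" "l1 + n1 + k1 = 1"
      "z = l1 *\<^sub>R a + n1 *\<^sub>R m + k1 *\<^sub>R c"
    using z1 convex_hull_3E by blast
  obtain n2 l2 k2 where h2: "0 \<le> n2" "0 \<le> l2" "0 \<le> k2" "n2 + l2 + k2 = 1"
      "z = n2 *\<^sub>R m + l2 *\<^sub>R b + k2 *\<^sub>R c"
    using z2 convex_hull_3E by blast
  have "z = (l1 + n1 * (1 - u)) *\<^sub>R a + (n1 * u) *\<^sub>R b + k1 *\<^sub>R c"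
    using h1(5) u(3) by (simp add: algebra_simps)
  moreover have "z = (n2 * (1 - u)) *\<^sub>R a + (l2 + n2 * u) *\<^sub>R b + k2 *\<^sub>R c"
    using h2(5) u(3) by (simp add: algebra_simps)
  ultimately have "l1 + n1 * (1 - u) = n2 * (1 - u) \<and> n1 * u = l2 + n2 * u \<and> k1 = k2"
    by (intro noncollinear_barycentric_unique[OF nc]) (use h1(4) h2(4) in \<open>simp_all add: algebra_simps\<close>)
  then have q: "l1 = (n2 - n1) * (1 - u)" "l2 = (n1 - n2) * u" by (simp_all add: algebra_simps)
  have "n2 - n1 \<ge> 0" using q(1) h1(1) u by (simp add: zero_le_mult_iff)
  moreover have "n1 - n2 \<ge> 0" using q(2) h2(2) u by (simp add: zero_le_mult_iff)
  ultimately have "l1 = 0" using q by simp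
  then have "k1 = 1 - n1" using h1(4) by simp
  then have "z = (1 - n1) *\<^sub>R c + n1 *\<^sub>R m" "n1 \<le> 1" using h1 \<open>l1 = 0\<close> by simp_all
  then show ?thesis using h1(2) closed_segmentI[of n1 c m] by simp
qed

lemma convex_hull_3_split_inter_side:
  fixes a b c m :: "'a::real_vector"
  assumes nc: "\<not> collinear {a,b,c}" and m: "m \<in> open_segment a b"
    and z1: "z \<in> convex hull {a,m,c}" and z2: "z \<in> closed_segment a b"
  shows "z \<in> closed_segment a m"
proof -
  obtain u where u: "0 < u" "u < 1" "m = (1 - u) *\<^sub>R a + u *\<^sub>R b"
    using m open_segmentE by blast
  obtain l n k where h1: "0 \<le> l" "0 \<le> n" "0 \<le> k" "l + n + k = 1"
      "z = l *\<^sub>R a + n *\<^sub>R m + k *\<^sub>R c"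
    using z1 convex_hull_3E by blast
  obtain s where h2: "0 \<le> s" "s \<le> 1" "z = (1 - s) *\<^sub>R a + s *\<^sub>R b"
    using z2 closed_segmentE by blast
  have "z = (l + n * (1 - u)) *\<^sub>R a + (n * u) *\<^sub>R b + k *\<^sub>R c"
    using h1(5) u(3) by (simp add: algebra_simps)
  moreover have "z = (1 - s) *\<^sub>R a + s *\<^sub>R b + 0 *\<^sub>R c" using h2(3) by simp
  ultimately have "l + n * (1 - u) = 1 - s \<and> n * u = s \<and> k = 0"
    by (intro noncollinear_barycentric_unique[OF nc]) (use h1(4) in \<open>simp_all add: algebra_simps\<close>)
  then have "k = 0" by simp
  then have "l = 1 - n" using h1(4) by simp
  then have "z = (1 - n) *\<^sub>R a + n *\<^sub>R m" "n \<le> 1" using h1 \<open>k = 0\<close> by simp_all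
  then show ?thesis using h1(2) closed_segmentI[of n a m] by simp
qed

lemma noncollinear_open_segment_Int_closed_segment:
  fixes a b c :: "'a::real_vector"
  assumes nc: "\<not> collinear {a,b,c}"
  shows "open_segment a b \<inter> closed_segment a c = {}"
proof (intro equals0I)
  fix m assume "m \<in> open_segment a b \<inter> closed_segment a c"
  then obtain u s where u: "0 < u" "u < 1" "m = (1 - u) *\<^sub>R a + u *\<^sub>R b"
      and s: "m = (1 - s) *\<^sub>R a + s *\<^sub>R c"
    using open_segmentE closed_segmentE by (metis IntE)
  have "(1 - u) *\<^sub>R a + u *\<^sub>R b + 0 *\<^sub>R c = (1 - s) *\<^sub>R a + 0 *\<^sub>R b + s *\<^sub>R c"
    using u(3) s by simp
  then have "1 - u = 1 - s \<and> u = 0 \<and> 0 = s"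
    by (intro noncollinear_barycentric_unique[OF nc]) simp_all
  then have "u = 0" by simp
  then show False using u by simp
qed

lemma closed_segment_Int_split_half:
  fixes a b c m :: "'a::real_vector"
  assumes nc: "\<not> collinear {a,b,c}" and m: "m \<in> open_segment a b"
    and z1: "z \<in> closed_segment b c" and z2: "z \<in> convex hull {a,m,c}"
  shows "z = c"
proof -
  obtain u where u: "0 < u" "u < 1" "m = (1 - u) *\<^sub>R a + u *\<^sub>R b"
    using m open_segmentE by blast
  obtain l n k where h1: "0 \<le> l" "0 \<le> n" "0 \<le> k" "l + n + k = 1"
      "z = l *\<^sub>R a + n *\<^sub>R m + k *\<^sub>R c"
    using z2 convex_hull_3E by blast
  obtain s where h2: "0 \<le> s" "s \<le> 1" "z = (1 - s) *\<^sub>R b + s *\<^sub>R c"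
    using z1 closed_segmentE by blast
  have "z = (l + n * (1 - u)) *\<^sub>R a + (n * u) *\<^sub>R b + k *\<^sub>R c"
    using h1(5) u(3) by (simp add: algebra_simps)
  moreover have "z = 0 *\<^sub>R a + (1 - s) *\<^sub>R b + s *\<^sub>R c" using h2(3) by simp
  ultimately have q: "l + n * (1 - u) = 0 \<and> n * u = 1 - s \<and> k = s"
    by (intro noncollinear_barycentric_unique[OF nc]) (use h1(4) in \<open>simp_all add: algebra_simps\<close>)
  have "n * (1 - u) \<ge> 0" using h1(2) u(2) by simp
  then have "n * (1 - u) = 0" using q h1(1) by linarith
  then have "n = 0" using u(2) by simp
  then show ?thesis using q h2(3) by simp
qed

lemma crossing_diagonals_Un:
  fixes a b c d m :: "'a::euclidean_space"
  assumes "m \<in> open_segment a b" and "m \<in> open_segment c d"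
  shows "convex hull {a,b,c} \<union> convex hull {a,b,d} = convex hull {a,c,d} \<union> convex hull {b,c,d}"
proof -
  have incl: "convex hull {a,b,c} \<union> convex hull {a,b,d} \<subseteq> convex hull {a,c,d} \<union> convex hull {b,c,d}"
    if mab: "m \<in> open_segment a b" and mcd: "m \<in> open_segment c d" for a b c d :: 'a
  proof -
    have "m \<in> convex hull {a,c,d}" "m \<in> convex hull {b,c,d}"
      using closed_segment_subset_convex_hull_3[of c d] open_closed_segment[OF mcd]
      by (auto simp: insert_commute)
    note m_in = this
    have "convex hull {a,m,c} \<subseteq> convex hull {a,c,d}" "convex hull {m,b,c} \<subseteq> convex hull {b,c,d}"
      "convex hull {a,m,d} \<subseteq> convex hull {a,c,d}" "convex hull {m,b,d} \<subseteq> convex hull {b,c,d}"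
      by (rule convex_hull_3_subset; simp add: hull_inc m_in)+
    then show ?thesis
      using convex_hull_3_split[OF open_closed_segment[OF mab]] by blast
  qed
  show ?thesis
    using incl[OF assms] incl[OF assms(2,1)] by (auto simp: insert_commute)
qed

lemma split_halves_Int:
  fixes a b e e' m :: "'a::euclidean_space"
  assumes nc: "\<not> collinear {a,b,e}" and nc': "\<not> collinear {a,b,e'}"
    and mab: "m \<in> open_segment a b"
    and ff: "convex hull {a,b,e} \<inter> convex hull {a,b,e'} \<subseteq> closed_segment a b"
    and z1: "z \<in> convex hull {a,m,e}" and z2: "z \<in> convex hull {m,b,e} \<union> convex hull {m,b,e'}"
  shows "z \<in> closed_segment e m"
proof (cases "z \<in> convex hull {m,b,e}")
  case True
  then show ?thesis using convex_hull_3_split_inter[OF nc mab z1] by blast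
next
  case False
  then have z2': "z \<in> convex hull {b,m,e'}" using z2 by (simp add: insert_commute)
  have "m \<in> convex hull {a,b,e}" "m \<in> convex hull {a,b,e'}"
    using closed_segment_subset_convex_hull_3 open_closed_segment[OF mab] by blast+
  note m_in = this
  have "convex hull {a,m,e} \<subseteq> convex hull {a,b,e}" "convex hull {b,m,e'} \<subseteq> convex hull {a,b,e'}"
    by (rule convex_hull_3_subset; simp add: hull_inc m_in)+
  then have z_ab: "z \<in> closed_segment a b" using ff z1 z2' by blast
  have "z \<in> closed_segment a m"
    using convex_hull_3_split_inter_side[OF nc mab z1 z_ab] .
  moreover have "z \<in> closed_segment m b"
    using convex_hull_3_split_inter_side[of b a e' m z] nc' mab z2' z_ab
    by (simp add: insert_commute open_segment_commute closed_segment_commute)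
  ultimately have "z = m" using Int_closed_segment open_closed_segment[OF mab] by blast
  then show ?thesis by simp
qed

lemma crossing_diagonals_new_triangles_Int:
  fixes a b c d m :: "'a::euclidean_space"
  assumes nc: "\<not> collinear {a,b,c}" "\<not> collinear {a,b,d}"
    and mab: "m \<in> open_segment a b" and mcd: "m \<in> open_segment c d"
    and ff: "convex hull {a,b,c} \<inter> convex hull {a,b,d} \<subseteq> closed_segment a b"
    and z1: "z \<in> convex hull {a,c,d}" and z2: "z \<in> convex hull {b,c,d}"
  shows "z \<in> closed_segment c d"
proof -
  have mc: "m \<in> closed_segment c d" using open_closed_segment[OF mcd] .
  then have sub: "closed_segment c m \<subseteq> closed_segment c d" "closed_segment d m \<subseteq> closed_segment c d"
    by (auto simp: subset_closed_segment closed_segment_commute)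
  have z_b: "z \<in> convex hull {m,b,c} \<union> convex hull {m,b,d}"
    using convex_hull_3_split[OF mc, of b] z2 by (auto simp: insert_commute)
  have "z \<in> convex hull {a,m,c} \<or> z \<in> convex hull {a,m,d}"
    using convex_hull_3_split[OF mc, of a] z1 by (auto simp: insert_commute)
  then show ?thesis
  proof
    assume "z \<in> convex hull {a,m,c}"
    then have "z \<in> closed_segment c m" using split_halves_Int[OF nc mab ff] z_b by blast
    then show ?thesis using sub by blast
  next
    assume "z \<in> convex hull {a,m,d}"
    then have "z \<in> closed_segment d m" using split_halves_Int[OF nc(2,1) mab] ff z_b by blast
    then show ?thesis using sub by blast
  qed
qed

lemma crossing_diagonals_side_Int:
  fixes a b c d m :: "'a::euclidean_space"
  assumes nc1: "\<not> collinear {a,b,c}" and nc2: "\<not> collinear {a,b,d}"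
    and mab: "m \<in> open_segment a b" and mcd: "m \<in> open_segment c d"
    and ff: "convex hull {a,b,c} \<inter> convex hull {a,b,d} \<subseteq> closed_segment a b"
    and z1: "z \<in> closed_segment b c" and z2: "z \<in> convex hull {a,c,d}"
  shows "z = c"
proof (cases "z \<in> convex hull {a,m,c}")
  case True
  then show ?thesis using closed_segment_Int_split_half[OF nc1 mab z1] by blast
next
  case False
  have mc: "m \<in> closed_segment c d" using open_closed_segment[OF mcd] .
  then have A: "z \<in> convex hull {a,m,d}"
    using False z2 convex_hull_3_split[OF mc, of a] by (auto simp: insert_commute)
  have "m \<in> convex hull {a,b,d}"
    using closed_segment_subset_convex_hull_3 open_closed_segment[OF mab] by blast
  note m_in = this
  have "convex hull {a,m,d} \<subseteq> convex hull {a,b,d}"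
    by (rule convex_hull_3_subset; simp add: hull_inc m_in)+
  moreover have "closed_segment b c \<subseteq> convex hull {a,b,c}"
    using closed_segment_subset_convex_hull_3[of b c a] by (simp add: insert_commute)
  ultimately have "z \<in> closed_segment a b \<inter> closed_segment b c" using ff A z1 by blast
  then have "z = b" using Int_closed_segment nc1 by blast
  moreover have "b \<notin> convex hull {a,m,d}"
    using closed_segment_Int_split_half[OF nc2 mab, of b] nc2 by auto
  ultimately show ?thesis using A by simp
qed

lemma convex_quad_diagonals_cross:
  fixes a b c d :: "'a::euclidean_space"
  assumes nc1: "\<not> collinear {a,b,c}" and nc2: "\<not> collinear {a,b,d}"
    and nc3: "\<not> collinear {a,c,d}" and nc4: "\<not> collinear {b,c,d}"
    and ff: "convex hull {a,b,c} \<inter> convex hull {a,b,d} \<subseteq> closed_segment a b"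
    and cv: "convex (convex hull {a,b,c} \<union> convex hull {a,b,d})"
  obtains m where "m \<in> open_segment a b" "m \<in> open_segment c d"
proof -
  let ?A = "convex hull {a,b,c}" and ?B = "convex hull {a,b,d}" and ?S = "closed_segment c d"
  have "closed ?A" "closed ?B"
    by (simp_all add: compact_imp_closed finite_imp_compact_convex_hull)
  moreover have "c \<in> ?A" "d \<in> ?B" by (simp_all add: hull_inc)
  moreover have "?S \<subseteq> ?A \<union> ?B"
    by (rule closed_segment_subset) (use cv in \<open>auto intro: hull_inc\<close>)
  ultimately have "?A \<inter> ?B \<inter> ?S \<noteq> {}"
    using connected_segment[of c d] unfolding connected_closed by blast
  then obtain m where m: "m \<in> closed_segment a b" "m \<in> ?S" using ff by blast
  have collinear: "collinear {x,y,z}" if "x \<in> closed_segment y z" for x y z :: 'a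
  proof -
    have "{x,y,z} \<subseteq> closed_segment y z" using that by auto
    then show ?thesis using collinear_subset collinear_closed_segment by blast
  qed
  have "m \<noteq> a" "m \<noteq> b" using m(2) nc3 nc4 collinear by blast+
  moreover have "m \<noteq> e" if "\<not> collinear {a,b,e}" for e
  proof
    assume "m = e"
    then have "collinear {e,a,b}" using m(1) collinear by simp
    then show False using that by (simp add: insert_commute)
  qed
  ultimately show ?thesis using that m nc1 nc2 unfolding open_segment_def by blast
qed

lemma small_step_keeps_positive:
  fixes x y p q :: real
  assumes "0 < x" "0 < y"
  obtains \<delta> where "0 < \<delta>" "\<delta> < 1" "0 < (1 - \<delta>) * x + \<delta> * p" "0 < (1 - \<delta>) * y + \<delta> * q"
proof -
  have "((\<lambda>\<delta>. (1 - \<delta>) * x + \<delta> * p) \<longlongrightarrow> (1 - 0) * x + 0 * p) (at_right 0)"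
    "((\<lambda>\<delta>. (1 - \<delta>) * y + \<delta> * q) \<longlongrightarrow> (1 - 0) * y + 0 * q) (at_right 0)"
    by (intro tendsto_intros)+
  then have "\<forall>\<^sub>F \<delta> in at_right 0. 0 < (1 - \<delta>) * x + \<delta> * p"
    "\<forall>\<^sub>F \<delta> in at_right 0. 0 < (1 - \<delta>) * y + \<delta> * q"
    using assms by (auto intro: order_tendstoD(1))
  moreover have "\<forall>\<^sub>F \<delta> in at_right 0. \<delta> \<in> {0<..<1::real}" by (rule eventually_at_right_real) simp
  ultimately have "\<exists>\<delta>. 0 < (1 - \<delta>) * x + \<delta> * p \<and> 0 < (1 - \<delta>) * y + \<delta> * q \<and> \<delta> \<in> {0<..<1}"
    using eventually_happens'[OF trivial_limit_at_right_real] eventually_conj by (metis (mono_tags, lifting))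
  then show ?thesis using that by auto
qed

lemma same_side_triangles_overlap:
  fixes a b c w m :: "'a::real_vector"
  assumes nc: "\<not> collinear {a,b,c}" and mab: "m \<in> open_segment a b"
    and w: "w = p *\<^sub>R a + q *\<^sub>R b + r *\<^sub>R c" "p + q + r = 1" "r > 0"
  obtains z where "z \<in> convex hull {a,b,w}" "z \<in> convex hull {a,b,c}" "z \<notin> closed_segment a b"
proof -
  obtain u where u: "0 < u" "u < 1" "m = (1 - u) *\<^sub>R a + u *\<^sub>R b"
    using mab open_segmentE by blast
  \<comment> \<open>Move from \<open>m\<close> slightly towards \<open>w\<close>: for small \<open>\<delta>\<close> the point stays on \<open>c\<close>'s side of \<open>ab\<close>.\<close>
  obtain \<delta> where \<delta>: "0 < \<delta>" "\<delta> < 1" "0 < (1 - \<delta>) * (1 - u) + \<delta> * p" "0 < (1 - \<delta>) * u + \<delta> * q"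
    using small_step_keeps_positive[of "1 - u" u p q] u by auto
  define \<alpha> where "\<alpha> = (1 - \<delta>) * (1 - u) + \<delta> * p"
  define \<beta> where "\<beta> = (1 - \<delta>) * u + \<delta> * q"
  note \<delta> = \<delta>[folded \<alpha>_def \<beta>_def]
  define z where "z = (1 - \<delta>) *\<^sub>R m + \<delta> *\<^sub>R w"
  have z_eq: "z = \<alpha> *\<^sub>R a + \<beta> *\<^sub>R b + (\<delta> * r) *\<^sub>R c"
    unfolding z_def \<alpha>_def \<beta>_def u(3) w(1) by (simp add: algebra_simps)
  have "\<alpha> + \<beta> + \<delta> * r = (1 - \<delta>) + \<delta> * (p + q + r)"
    unfolding \<alpha>_def \<beta>_def by (simp add: algebra_simps)
  then have sum: "\<alpha> + \<beta> + \<delta> * r = 1" using w(2) by simp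
  have "z \<in> convex hull {a,b,c}"
    using z_eq convex_hull_3I[of \<alpha> \<beta> "\<delta> * r" a b c] sum \<delta> w(3) by simp
  moreover have "z \<in> convex hull {a,b,w}"
  proof -
    have "closed_segment m w \<subseteq> convex hull {a,b,w}"
      using closed_segment_subset_convex_hull_3[of a b w] open_closed_segment[OF mab]
      by (intro closed_segment_subset) (auto simp: hull_inc)
    moreover have "z \<in> closed_segment m w" unfolding z_def using \<delta> by (intro closed_segmentI) auto
    ultimately show ?thesis by blast
  qed
  moreover have "z \<notin> closed_segment a b"
  proof
    assume "z \<in> closed_segment a b"
    then obtain s where "z = (1 - s) *\<^sub>R a + s *\<^sub>R b + 0 *\<^sub>R c"
      using closed_segmentE by (metis add_0_right scale_zero_left)
    then have "\<alpha> = 1 - s \<and> \<beta> = s \<and> \<delta> * r = 0"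
      by (intro noncollinear_barycentric_unique[OF nc]) (use sum z_eq in simp_all)
    then show False using \<delta> w(3) by simp
  qed
  ultimately show ?thesis using that by blast
qed

lemma barycentric_across_crossing_diagonals:
  fixes a b c d w m :: "'a::real_vector"
  assumes mab: "m \<in> open_segment a b" and mcd: "m \<in> open_segment c d"
    and w: "w = p *\<^sub>R a + q *\<^sub>R b + r *\<^sub>R c" "p + q + r = 1" "r < 0"
  obtains p' q' r' where "w = p' *\<^sub>R a + q' *\<^sub>R b + r' *\<^sub>R d" "p' + q' + r' = 1" "r' > 0"
proof -
  obtain u where u: "m = (1 - u) *\<^sub>R a + u *\<^sub>R b" using mab open_segmentE by blast
  obtain v where v: "0 < v" "v < 1" "m = (1 - v) *\<^sub>R c + v *\<^sub>R d" using mcd open_segmentE by blast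
  \<comment> \<open>eliminate \<open>c = ((1 - u) a + u b - v d) / (1 - v)\<close>\<close>
  define k where "k = r / (1 - v)"
  have kv: "k * (1 - v) = r" unfolding k_def using v by simp
  have "r *\<^sub>R c = k *\<^sub>R ((1 - v) *\<^sub>R c)" using kv by simp
  also have "(1 - v) *\<^sub>R c = (1 - u) *\<^sub>R a + u *\<^sub>R b - v *\<^sub>R d"
    using u v(3) by (simp add: algebra_simps)
  finally have c: "r *\<^sub>R c = (k * (1 - u)) *\<^sub>R a + (k * u) *\<^sub>R b - (k * v) *\<^sub>R d"
    by (simp add: algebra_simps)
  show ?thesis
  proof (rule that)
    show "w = (p + k * (1 - u)) *\<^sub>R a + (q + k * u) *\<^sub>R b + (- (k * v)) *\<^sub>R d"
      using w(1) c by (simp add: algebra_simps)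
    show "p + k * (1 - u) + (q + k * u) + - (k * v) = 1"
      using w(2) kv by (simp add: algebra_simps)
    show "0 < - (k * v)" unfolding k_def using v w(3) by (simp add: mult_neg_pos divide_neg_pos)
  qed
qed

lemma no_third_triangle_on_crossing_diagonal:
  fixes a b c d m w :: pt
  assumes nc1: "\<not> collinear {a,b,c}" and nc2: "\<not> collinear {a,b,d}" and ncw: "\<not> collinear {a,b,w}"
    and mab: "m \<in> open_segment a b" and mcd: "m \<in> open_segment c d"
    and ffc: "convex hull {a,b,w} \<inter> convex hull {a,b,c} \<subseteq> closed_segment a b"
    and ffd: "convex hull {a,b,w} \<inter> convex hull {a,b,d} \<subseteq> closed_segment a b"
  shows False
proof -
  obtain p q r where w: "p + q + r = 1" "w = p *\<^sub>R a + q *\<^sub>R b + r *\<^sub>R c"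
    using noncollinear_barycentricE[OF nc1] by blast
  have "r \<noteq> 0"
  proof
    assume "r = 0"
    then have "w \<in> affine hull {a,b}" using w unfolding affine_hull_2 by auto
    then show False using ncw affine_hull_3_imp_collinear by blast
  qed
  then consider "r > 0" | "r < 0" by linarith
  then show False
  proof cases
    case 1
    then show False using same_side_triangles_overlap[OF nc1 mab w(2,1)] ffc by blast
  next
    case 2
    then obtain p' q' r' where "w = p' *\<^sub>R a + q' *\<^sub>R b + r' *\<^sub>R d" "p' + q' + r' = 1" "r' > 0"
      using barycentric_across_crossing_diagonals[OF mab mcd w(2,1)] by blast
    then show False using same_side_triangles_overlap[OF nc2 mab] ffd by blast
  qed
qed

lemma triangulation_triangleD:
  assumes "triangulation P T" "t \<in> T"
  shows "t \<subseteq> P" "card t = 3" "\<not> collinear t"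
  using assms unfolding triangulation_def is_triangle_def by blast+

lemma triangulation_face_to_face:
  assumes "triangulation P T" "t1 \<in> T" "t2 \<in> T" "t1 \<noteq> t2"
  shows "convex hull t1 \<inter> convex hull t2 = convex hull (t1 \<inter> t2)"
  using assms unfolding triangulation_def by blast

lemma card_3_supset_doubletonE:
  assumes "card t = 3" "{a,b} \<subseteq> t" "a \<noteq> b"
  obtains c where "t = {a,b,c}" "c \<noteq> a" "c \<noteq> b"
proof -
  have "finite t" using assms(1) by (metis card.infinite zero_neq_numeral)
  then have "card (t - {a,b}) = 1" using assms by (simp add: card_Diff_subset)
  then obtain c where c: "t - {a,b} = {c}" using card_1_singletonE by blast
  then show ?thesis using that assms(2) by blast
qed

text \<open>The triangles \<open>abc\<close>, \<open>abd\<close> of \<open>T\<close> form a convex quadrilateral whose diagonal \<open>ab\<close>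
  can be flipped to \<open>cd\<close>.\<close>

definition convex_quad :: "triangle set \<Rightarrow> pt \<Rightarrow> pt \<Rightarrow> pt \<Rightarrow> pt \<Rightarrow> bool" where
  "convex_quad T a b c d \<longleftrightarrow> {a,b,c} \<in> T \<and> {a,b,d} \<in> T \<and>
     a \<noteq> b \<and> a \<noteq> c \<and> a \<noteq> d \<and> b \<noteq> c \<and> b \<noteq> d \<and> c \<noteq> d \<and>
     convex (convex hull {a,b,c} \<union> convex hull {a,b,d}) \<and>
     \<not> collinear {a,c,d} \<and> \<not> collinear {b,c,d}"

lemma convex_quad_swap_first: "convex_quad T a b c d \<Longrightarrow> convex_quad T b a c d"
  unfolding convex_quad_def by (auto simp: insert_commute)

lemma convex_quadE:
  assumes tr: "triangulation P T" and q: "convex_quad T a b c d"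
  obtains m where "\<not> collinear {a,b,c}" "\<not> collinear {a,b,d}"
    "convex hull {a,b,c} \<inter> convex hull {a,b,d} \<subseteq> closed_segment a b"
    "m \<in> open_segment a b" "m \<in> open_segment c d"
proof -
  have nc: "\<not> collinear {a,b,c}" "\<not> collinear {a,b,d}"
    using q triangulation_triangleD(3)[OF tr] unfolding convex_quad_def by blast+
  have "{a,b,c} \<noteq> {a,b,d}" using q unfolding convex_quad_def by (auto simp: doubleton_eq_iff)
  then have "convex hull {a,b,c} \<inter> convex hull {a,b,d} = convex hull ({a,b,c} \<inter> {a,b,d})"
    using q triangulation_face_to_face[OF tr] unfolding convex_quad_def by blast
  also have "{a,b,c} \<inter> {a,b,d} = {a,b}" using q unfolding convex_quad_def by auto
  finally have ff: "convex hull {a,b,c} \<inter> convex hull {a,b,d} \<subseteq> closed_segment a b"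
    by (simp add: segment_convex_hull)
  obtain m where "m \<in> open_segment a b" "m \<in> open_segment c d"
    by (rule convex_quad_diagonals_cross[OF nc _ _ ff]) (use q in \<open>auto simp: convex_quad_def\<close>)
  with nc ff that show ?thesis by blast
qed

lemma convex_quad_edge_triangles:
  assumes tr: "triangulation P T" and q: "convex_quad T a b c d" and t: "t \<in> T" "{a,b} \<subseteq> t"
  shows "t = {a,b,c} \<or> t = {a,b,d}"
proof (rule ccontr)
  assume ne: "\<not> (t = {a,b,c} \<or> t = {a,b,d})"
  obtain m where g: "\<not> collinear {a,b,c}" "\<not> collinear {a,b,d}"
      and m: "m \<in> open_segment a b" "m \<in> open_segment c d"
    using convex_quadE[OF tr q] by blast
  obtain w where w: "t = {a,b,w}" "w \<noteq> a" "w \<noteq> b"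
    using card_3_supset_doubletonE[OF triangulation_triangleD(2)[OF tr t(1)] t(2)] q
    unfolding convex_quad_def by blast
  have ff: "convex hull {a,b,w} \<inter> convex hull {a,b,e} \<subseteq> closed_segment a b"
    if "e \<in> {c,d}" for e
  proof -
    have "{a,b,e} \<in> T" "{a,b,e} \<noteq> t" using q ne that unfolding convex_quad_def by auto
    then have "convex hull {a,b,w} \<inter> convex hull {a,b,e} = convex hull ({a,b,w} \<inter> {a,b,e})"
      using triangulation_face_to_face[OF tr t(1)] w(1) by auto
    also have "{a,b,w} \<inter> {a,b,e} = {a,b}" using ne w that by auto
    finally show ?thesis by (simp add: segment_convex_hull)
  qed
  have "\<not> collinear {a,b,w}" using triangulation_triangleD(3)[OF tr t(1)] w by simp
  then show False using no_third_triangle_on_crossing_diagonal[OF g _ m] ff by blast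
qed

lemma convex_quad_no_triangle_on_diagonal:
  assumes tr: "triangulation P T" and q: "convex_quad T a b c d" and t: "t \<in> T"
  shows "\<not> {c,d} \<subseteq> t"
proof
  assume cd_t: "{c,d} \<subseteq> t"
  obtain m where nc: "\<not> collinear {a,b,c}" and m: "m \<in> open_segment a b" "m \<in> open_segment c d"
    using convex_quadE[OF tr q] by blast
  obtain w where w: "t = {c,d,w}" "w \<noteq> c" "w \<noteq> d"
    using card_3_supset_doubletonE[OF triangulation_triangleD(2)[OF tr t(1)] cd_t] q
    unfolding convex_quad_def by blast
  have abc: "{a,b,c} \<in> T" "t \<noteq> {a,b,c}" using w q unfolding convex_quad_def by auto
  have "m \<in> convex hull t" "m \<in> convex hull {a,b,c}"
    using closed_segment_subset_convex_hull_3 open_closed_segment m w(1) by blast+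
  then have m_in: "m \<in> convex hull (t \<inter> {a,b,c})"
    using triangulation_face_to_face[OF tr t abc] by blast
  consider "w = a" | "w = b" | "w \<noteq> a" "w \<noteq> b" by blast
  then show False
  proof cases
    case 1
    then have "m \<in> closed_segment a c"
      using m_in w q unfolding convex_quad_def by (auto simp: insert_commute segment_convex_hull)
    then show False using noncollinear_open_segment_Int_closed_segment[OF nc] m(1) by blast
  next
    case 2
    then have "m \<in> closed_segment b c"
      using m_in w q unfolding convex_quad_def by (auto simp: insert_commute segment_convex_hull)
    moreover have "\<not> collinear {b,a,c}" using nc by (simp add: insert_commute)
    moreover have "m \<in> open_segment b a" using m(1) by (simp add: open_segment_commute)
    ultimately show False using noncollinear_open_segment_Int_closed_segment by blast
  next
    case 3
    then have "t \<inter> {a,b,c} = {c}" using w q unfolding convex_quad_def by auto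
    then show False using m_in m(2) unfolding open_segment_def by simp
  qed
qed

lemma face_to_face_exchange_vertex:
  assumes ff: "convex hull {a,b,c} \<inter> convex hull t = convex hull ({a,b,c} \<inter> t)"
    and nab: "\<not> {a,b} \<subseteq> t" and bc: "b \<noteq> c"
    and z: "z \<in> convex hull {a,b,c}" "z \<in> convex hull t" "z \<in> convex hull {a,c,d}"
    and side: "\<And>y. y \<in> closed_segment b c \<Longrightarrow> y \<in> convex hull {a,c,d} \<Longrightarrow> y = c"
  shows "z \<in> convex hull ({a,c,d} \<inter> t)"
proof -
  have z_in: "z \<in> convex hull ({a,b,c} \<inter> t)" using ff z by blast
  show ?thesis
  proof (cases "b \<in> t")
    case False
    then have "{a,b,c} \<inter> t \<subseteq> {a,c,d} \<inter> t" by auto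
    then show ?thesis using z_in hull_mono by blast
  next
    case True
    then have bc_t: "{a,b,c} \<inter> t \<subseteq> {b,c}" using nab by auto
    then have "z \<in> closed_segment b c" using z_in hull_mono[OF bc_t] by (auto simp: segment_convex_hull)
    then have "z = c" using side z(3) by blast
    moreover have "c \<in> t"
    proof (rule ccontr)
      assume "c \<notin> t"
      then have "z \<in> convex hull {b}" using bc_t z_in hull_mono[of "{a,b,c} \<inter> t" "{b}"] by blast
      then show False using \<open>z = c\<close> bc by simp
    qed
    ultimately show ?thesis by (simp add: hull_inc)
  qed
qed

lemma convex_quad_new_triangle_face_to_face:
  assumes tr: "triangulation P T" and q: "convex_quad T a b c d"
    and t: "t \<in> T" "\<not> {a,b} \<subseteq> t"
  shows "convex hull {a,c,d} \<inter> convex hull t = convex hull ({a,c,d} \<inter> t)"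
proof
  show "convex hull ({a,c,d} \<inter> t) \<subseteq> convex hull {a,c,d} \<inter> convex hull t"
    by (simp add: hull_mono)
next
  obtain m where nc: "\<not> collinear {a,b,c}" "\<not> collinear {a,b,d}"
      and ff: "convex hull {a,b,c} \<inter> convex hull {a,b,d} \<subseteq> closed_segment a b"
      and m: "m \<in> open_segment a b" "m \<in> open_segment c d"
    using convex_quadE[OF tr q] by blast
  have m': "m \<in> open_segment d c" using m(2) by (simp add: open_segment_commute)
  have old: "convex hull {a,b,e} \<inter> convex hull t = convex hull ({a,b,e} \<inter> t)" if "e \<in> {c,d}" for e
    using triangulation_face_to_face[OF tr _ t(1)] q t(2) that unfolding convex_quad_def by auto
  have side_c: "y = c" if "y \<in> closed_segment b c" "y \<in> convex hull {a,c,d}" for y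
    using crossing_diagonals_side_Int[OF nc m ff that] .
  have side_d: "y = d" if "y \<in> closed_segment b d" "y \<in> convex hull {a,d,c}" for y
    using crossing_diagonals_side_Int[OF nc(2,1) m(1) m'] ff that by (auto simp: Int_commute)
  have bcd: "b \<noteq> c" "b \<noteq> d" using q unfolding convex_quad_def by blast+
  show "convex hull {a,c,d} \<inter> convex hull t \<subseteq> convex hull ({a,c,d} \<inter> t)"
  proof
    fix z assume z: "z \<in> convex hull {a,c,d} \<inter> convex hull t"
    then have "z \<in> convex hull {a,b,c} \<or> z \<in> convex hull {a,b,d}"
      using crossing_diagonals_Un[OF m] by blast
    then show "z \<in> convex hull ({a,c,d} \<inter> t)"
    proof
      assume "z \<in> convex hull {a,b,c}"
      then show ?thesis
        using face_to_face_exchange_vertex[OF old[of c] t(2) bcd(1)] side_c z by blast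
    next
      assume zd: "z \<in> convex hull {a,b,d}"
      have "z \<in> convex hull {a,d,c}" using z by (simp add: insert_commute)
      then have "z \<in> convex hull ({a,d,c} \<inter> t)"
        using face_to_face_exchange_vertex[OF old[of d] t(2) bcd(2) zd _ _ side_d] z by blast
      then show ?thesis by (simp add: insert_commute)
    qed
  qed
qed

lemma convex_quad_new_triangles_face_to_face:
  assumes tr: "triangulation P T" and q: "convex_quad T a b c d"
  shows "convex hull {a,c,d} \<inter> convex hull {b,c,d} = convex hull ({a,c,d} \<inter> {b,c,d})"
proof -
  obtain m where nc: "\<not> collinear {a,b,c}" "\<not> collinear {a,b,d}"
      and ff: "convex hull {a,b,c} \<inter> convex hull {a,b,d} \<subseteq> closed_segment a b"
      and m: "m \<in> open_segment a b" "m \<in> open_segment c d"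
    using convex_quadE[OF tr q] by blast
  have "{a,c,d} \<inter> {b,c,d} = {c,d}" using q unfolding convex_quad_def by auto
  moreover have "convex hull {c,d} \<subseteq> convex hull {a,c,d} \<inter> convex hull {b,c,d}"
    by (intro Int_greatest hull_mono) auto
  ultimately show ?thesis
    using crossing_diagonals_new_triangles_Int[OF nc m ff] by (auto simp: segment_convex_hull)
qed

lemma triangulation_replace_triangles:
  assumes tr: "triangulation P (R \<union> Old)" and fin: "finite New"
    and tri: "\<forall>t\<in>New. is_triangle P t"
    and cover: "(\<Union>t\<in>New. convex hull t) = (\<Union>t\<in>Old. convex hull t)"
    and verts: "\<Union>New = \<Union>Old"
    and ff: "\<forall>t1\<in>New. \<forall>t2\<in>R \<union> New. t1 \<noteq> t2 \<longrightarrow>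
               convex hull t1 \<inter> convex hull t2 = convex hull (t1 \<inter> t2)"
  shows "triangulation P (R \<union> New)"
  unfolding triangulation_def
proof (intro conjI ballI impI)
  show "finite P" "finite (R \<union> New)" using tr fin unfolding triangulation_def by auto
  show "is_triangle P t" if "t \<in> R \<union> New" for t
    using that tr tri unfolding triangulation_def by blast
  show "(\<Union>t\<in>R \<union> New. convex hull t) = convex hull P"
    using tr cover unfolding triangulation_def by simp
  show "\<Union>(R \<union> New) = P" using tr verts unfolding triangulation_def by simp
  fix t1 t2 assume t12: "t1 \<in> R \<union> New" "t2 \<in> R \<union> New" "t1 \<noteq> t2"
  show "convex hull t1 \<inter> convex hull t2 = convex hull (t1 \<inter> t2)"
  proof (cases "t1 \<in> New")
    case True
    then show ?thesis using ff t12 by blast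
  next
    case False
    show ?thesis
    proof (cases "t2 \<in> New")
      case True
      then have "convex hull t2 \<inter> convex hull t1 = convex hull (t2 \<inter> t1)" using ff t12 by blast
      then show ?thesis by (simp add: Int_commute)
    next
      case False
      then show ?thesis using \<open>t1 \<notin> New\<close> t12 tr unfolding triangulation_def by blast
    qed
  qed
qed

lemma triangulation_flip_convex_quad:
  assumes tr: "triangulation P T" and q: "convex_quad T a b c d"
  shows "triangulation P ((T - {t\<in>T. {a,b} \<subseteq> t}) \<union> {{a,c,d},{b,c,d}})"
proof -
  define R where "R = T - {t\<in>T. {a,b} \<subseteq> t}"
  obtain m where m: "m \<in> open_segment a b" "m \<in> open_segment c d"
    using convex_quadE[OF tr q] by blast
  have T_eq: "T = R \<union> {{a,b,c},{a,b,d}}"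
    using convex_quad_edge_triangles[OF tr q] q unfolding convex_quad_def R_def by auto
  have old_ff: "convex hull {e,c,d} \<inter> convex hull t = convex hull ({e,c,d} \<inter> t)"
    if "e = a \<or> e = b" "t \<in> R" for e t
  proof -
    have t: "t \<in> T" "\<not> {a,b} \<subseteq> t" "\<not> {b,a} \<subseteq> t" using that(2) unfolding R_def by auto
    show ?thesis
      using that(1) convex_quad_new_triangle_face_to_face[OF tr q t(1,2)]
        convex_quad_new_triangle_face_to_face[OF tr convex_quad_swap_first[OF q] t(1,3)] by blast
  qed
  have "triangulation P (R \<union> {{a,c,d},{b,c,d}})"
  proof (rule triangulation_replace_triangles)
    show "triangulation P (R \<union> {{a,b,c},{a,b,d}})" using tr T_eq by simp
    show "\<forall>t\<in>{{a,c,d},{b,c,d}}. is_triangle P t"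
      using q triangulation_triangleD(1)[OF tr] unfolding convex_quad_def is_triangle_def by auto
    show "(\<Union>t\<in>{{a,c,d},{b,c,d}}. convex hull t) = (\<Union>t\<in>{{a,b,c},{a,b,d}}. convex hull t)"
      using crossing_diagonals_Un[OF m] by simp
    show "\<Union>{{a,c,d},{b,c,d}} = \<Union>{{a,b,c},{a,b,d}}" by auto
    show "\<forall>t1\<in>{{a,c,d},{b,c,d}}. \<forall>t2\<in>R \<union> {{a,c,d},{b,c,d}}. t1 \<noteq> t2 \<longrightarrow>
        convex hull t1 \<inter> convex hull t2 = convex hull (t1 \<inter> t2)"
    proof (intro ballI impI)
      fix t1 t2 assume "t1 \<in> {{a,c,d},{b,c,d}}" "t2 \<in> R \<union> {{a,c,d},{b,c,d}}" "t1 \<noteq> t2"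
      then have "t1 = {a,c,d} \<or> t1 = {b,c,d}" "t2 = {a,c,d} \<or> t2 = {b,c,d} \<or> t2 \<in> R" "t1 \<noteq> t2"
        by simp_all
      then show "convex hull t1 \<inter> convex hull t2 = convex hull (t1 \<inter> t2)"
        using old_ff convex_quad_new_triangles_face_to_face[OF tr q]
        by (elim disjE) (simp_all add: Int_commute)
    qed
  qed simp
  then show ?thesis unfolding R_def .
qed

definition new_triangles :: "flip \<Rightarrow> triangle set" where
  "new_triangles f = (\<lambda>a. insert a (phi f)) ` eps f"

lemma perform_eq: "perform T f = {t\<in>T. \<not> eps f \<subseteq> t} \<union> new_triangles f"
  unfolding perform_def new_triangles_def by blast

lemma new_triangles_eq: "eps f = {a,b} \<Longrightarrow> phi f = {c,d} \<Longrightarrow> new_triangles f = {{a,c,d},{b,c,d}}"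
  unfolding new_triangles_def by auto

lemma admissible_convex_quadE:
  assumes tr: "triangulation P T" and ad: "admissible T f"
    and tr': "triangulation P (perform T f)"
  obtains a b c d where "eps f = {a,b}" "phi f = {c,d}" "convex_quad T a b c d"
proof -
  from ad obtain t1 t2 where t: "t1 \<in> T" "t2 \<in> T" "t1 \<noteq> t2" "eps f \<subseteq> t1" "eps f \<subseteq> t2"
      "convex (convex hull t1 \<union> convex hull t2)" "phi f = (t1 \<union> t2) - eps f"
    and e: "eps f \<in> edges T"
    unfolding admissible_def by blast
  obtain a b where ab: "eps f = {a,b}" "a \<noteq> b"
    using e unfolding edges_def by (auto simp: card_2_iff)
  obtain c where c: "t1 = {a,b,c}" "c \<noteq> a" "c \<noteq> b"
    using card_3_supset_doubletonE[OF triangulation_triangleD(2)[OF tr t(1)]] t(4) ab by blast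
  obtain d where d: "t2 = {a,b,d}" "d \<noteq> a" "d \<noteq> b"
    using card_3_supset_doubletonE[OF triangulation_triangleD(2)[OF tr t(2)]] t(5) ab by blast
  have phi: "phi f = {c,d}" using t(7) ab c d by auto
  have "{a,c,d} \<in> perform T f" "{b,c,d} \<in> perform T f"
    unfolding perform_eq new_triangles_eq[OF ab(1) phi] by auto
  then have "\<not> collinear {a,c,d}" "\<not> collinear {b,c,d}"
    using triangulation_triangleD(3)[OF tr'] by blast+
  then have "convex_quad T a b c d" unfolding convex_quad_def using t c d ab by auto
  then show ?thesis using that ab(1) phi by blast
qed

locale commuting_flips =
  fixes P :: "pt set" and H :: "triangle set" and x y :: flip
  assumes tr: "triangulation P H"
    and adm_x: "admissible H x" and tr_x: "triangulation P (perform H x)"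
    and adm_y: "admissible (perform H x) y" and tr_xy: "triangulation P (perform (perform H x) y)"
    and independent: "\<forall>u\<in>new_triangles x. \<not> eps y \<subseteq> u"
begin

lemma convex_quad_yE:
  obtains a b c d where "eps y = {a,b}" "phi y = {c,d}" "convex_quad H a b c d"
proof -
  obtain a b c d where abcd: "eps y = {a,b}" "phi y = {c,d}" "convex_quad (perform H x) a b c d"
    using admissible_convex_quadE[OF tr_x adm_y tr_xy] by blast
  have "{a,b,c} \<in> perform H x" "{a,b,d} \<in> perform H x"
    using abcd(3) unfolding convex_quad_def by blast+
  moreover have "{a,b,c} \<notin> new_triangles x" "{a,b,d} \<notin> new_triangles x"
    using independent abcd(1) by auto
  ultimately have "{a,b,c} \<in> H" "{a,b,d} \<in> H" unfolding perform_eq by blast+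
  then show ?thesis using that abcd unfolding convex_quad_def by blast
qed

lemma no_triangle_on_both_edges:
  assumes t: "t \<in> H" "eps x \<subseteq> t" "eps y \<subseteq> t"
  shows False
proof -
  obtain a b c d where x: "eps x = {a,b}" "phi x = {c,d}" "convex_quad H a b c d"
    by (rule admissible_convex_quadE[OF tr adm_x tr_x])
  obtain a' b' c' d' where y: "eps y = {a',b'}" "phi y = {c',d'}" "convex_quad (perform H x) a' b' c' d'"
    by (rule admissible_convex_quadE[OF tr_x adm_y tr_xy])
  have "{a',b',c'} \<in> perform H x" "{a',b',c'} \<notin> new_triangles x"
    using independent y(1,3) unfolding convex_quad_def by auto
  then have "\<not> eps x \<subseteq> {a',b',c'}" unfolding perform_eq by blast
  then have ne: "{a',b'} \<noteq> {a,b}" using x(1) by auto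
  have "t = {a,b,c} \<or> t = {a,b,d}"
    using convex_quad_edge_triangles[OF tr x(3) t(1)] t(2) x(1) by simp
  moreover have "a' \<noteq> b'" using y(3) unfolding convex_quad_def by blast
  ultimately have "{a',b'} \<subseteq> {a,c,d} \<or> {a',b'} \<subseteq> {b,c,d}"
    using t(3) y(1) ne by (auto simp: doubleton_eq_iff)
  moreover have "{a,c,d} \<in> new_triangles x" "{b,c,d} \<in> new_triangles x"
    using new_triangles_eq[OF x(1,2)] by simp_all
  ultimately show False using independent y(1) by blast
qed

lemma new_triangles_y_avoid_eps_x:
  assumes u: "u \<in> new_triangles y"
  shows "\<not> eps x \<subseteq> u"
proof
  assume x_u: "eps x \<subseteq> u"
  obtain a b c d where x: "eps x = {a,b}" "phi x = {c,d}" "convex_quad H a b c d"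
    by (rule admissible_convex_quadE[OF tr adm_x tr_x])
  obtain a' b' c' d' where y: "eps y = {a',b'}" "phi y = {c',d'}" "convex_quad H a' b' c' d'"
    by (rule convex_quad_yE)
  have old: "{a',b',c'} \<in> H" "{a',b',d'} \<in> H" using y(3) unfolding convex_quad_def by blast+
  have "a \<noteq> b" using x(3) unfolding convex_quad_def by blast
  then have "{c',d'} \<subseteq> {a,b} \<or> {a,b} \<subseteq> {a',b',c'} \<or> {a,b} \<subseteq> {a',b',d'}"
    using u x_u new_triangles_eq[OF y(1,2)] x(1) by auto
  then show False
  proof (elim disjE)
    assume "{c',d'} \<subseteq> {a,b}"
    moreover have "{a,b,c} \<in> H" using x(3) unfolding convex_quad_def by blast
    ultimately show False using convex_quad_no_triangle_on_diagonal[OF tr y(3)] by blast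
  qed (use no_triangle_on_both_edges old x(1) y(1) in auto)
qed

lemma admissible_y: "admissible H y"
proof -
  from adm_y obtain t1 t2 where t: "t1 \<in> perform H x" "t2 \<in> perform H x" "t1 \<noteq> t2"
      "eps y \<subseteq> t1" "eps y \<subseteq> t2" "convex (convex hull t1 \<union> convex hull t2)"
      "phi y = (t1 \<union> t2) - eps y"
    and "eps y \<in> edges (perform H x)"
    unfolding admissible_def by blast
  moreover have "t1 \<in> H" "t2 \<in> H" using t independent unfolding perform_eq by auto
  ultimately show ?thesis unfolding admissible_def edges_def by blast
qed

lemma triangulation_y: "triangulation P (perform H y)"
proof -
  obtain a b c d where y: "eps y = {a,b}" "phi y = {c,d}" "convex_quad H a b c d"
    by (rule convex_quad_yE)
  have "perform H y = (H - {t\<in>H. {a,b} \<subseteq> t}) \<union> {{a,c,d},{b,c,d}}"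
    unfolding perform_eq new_triangles_eq[OF y(1,2)] y(1) by blast
  then show ?thesis using triangulation_flip_convex_quad[OF tr y(3)] by simp
qed

lemma admissible_x_after_y: "admissible (perform H y) x"
proof -
  from adm_x obtain t1 t2 where t: "t1 \<in> H" "t2 \<in> H" "t1 \<noteq> t2" "eps x \<subseteq> t1" "eps x \<subseteq> t2"
      "convex (convex hull t1 \<union> convex hull t2)" "phi x = (t1 \<union> t2) - eps x"
    and "eps x \<in> edges H"
    unfolding admissible_def by blast
  moreover have "t1 \<in> perform H y" "t2 \<in> perform H y"
    using t no_triangle_on_both_edges unfolding perform_eq by blast+
  ultimately show ?thesis unfolding admissible_def edges_def by blast
qed

lemma perform_commute: "perform (perform H y) x = perform (perform H x) y"
  using independent new_triangles_y_avoid_eps_x unfolding perform_eq by blast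

end

lemma tri_after_0 [simp]: "tri_after T G 0 = T"
  unfolding tri_after_def by simp

lemma tri_after_Suc: "i < length G \<Longrightarrow> tri_after T G (Suc i) = perform (tri_after T G i) (G ! i)"
  unfolding tri_after_def by (simp add: take_Suc_conv_app_nth)

lemma valid_seq_triangulation: "valid_seq P T G \<Longrightarrow> i \<le> length G \<Longrightarrow> triangulation P (tri_after T G i)"
  unfolding valid_seq_def by (cases i) auto

lemma valid_seq_admissible: "valid_seq P T G \<Longrightarrow> i < length G \<Longrightarrow> admissible (tri_after T G i) (G ! i)"
  unfolding valid_seq_def by blast

text \<open>A refinement of the arc \<open>i \<rightarrow> j\<close> of \<open>D\<^sub>F\<close>; it is all the reordering argument needs.\<close>

definition creates_triangle_for :: "flip list \<Rightarrow> nat \<Rightarrow> nat \<Rightarrow> bool" where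
  "creates_triangle_for G i j \<longleftrightarrow> i < j \<and> j < length G \<and>
     (\<exists>t\<in>new_triangles (G ! i). eps (G ! j) \<subseteq> t \<and> (\<forall>p. i < p \<and> p < j \<longrightarrow> \<not> eps (G ! p) \<subseteq> t))"

lemma created_triangle_survives:
  assumes "i < j" "j \<le> length G" "t \<in> new_triangles (G ! i)"
    and "\<forall>p. i < p \<and> p < j \<longrightarrow> \<not> eps (G ! p) \<subseteq> t"
  shows "t \<in> tri_after T G j"
  using assms
proof (induction j)
  case (Suc j)
  then have j: "j < length G" by simp
  show ?case
  proof (cases "i = j")
    case True
    then show ?thesis using Suc.prems(3) tri_after_Suc[OF j] unfolding perform_eq by blast
  next
    case False
    then have "t \<in> tri_after T G j" "\<not> eps (G ! j) \<subseteq> t" using Suc by auto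
    then show ?thesis using tri_after_Suc[OF j] unfolding perform_eq by blast
  qed
qed simp

lemma creates_triangle_for_imp_adj:
  assumes v: "valid_seq P T F" and l: "creates_triangle_for F i j"
  shows "adj T F i j"
proof -
  from l obtain t where ij: "i < j" "j < length F"
      and t: "t \<in> new_triangles (F ! i)" "eps (F ! j) \<subseteq> t"
      and between: "\<forall>p. i < p \<and> p < j \<longrightarrow> \<not> eps (F ! p) \<subseteq> t"
    unfolding creates_triangle_for_def by blast
  have i: "i < length F" using ij by simp
  have "triangulation P (perform (tri_after T F i) (F ! i))"
    using valid_seq_triangulation[OF v, of "Suc i"] tri_after_Suc[OF i] i by simp
  then obtain a b c d where abcd: "eps (F ! i) = {a,b}" "phi (F ! i) = {c,d}"
      "convex_quad (tri_after T F i) a b c d"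
    using admissible_convex_quadE[OF valid_seq_triangulation[OF v less_imp_le[OF i]]
        valid_seq_admissible[OF v i]] by blast
  have "card (phi (F ! i)) = 2" using abcd unfolding convex_quad_def by simp
  moreover have "card (eps (F ! j)) = 2"
    using valid_seq_admissible[OF v ij(2)] unfolding admissible_def edges_def by blast
  moreover have phi_t: "phi (F ! i) \<subseteq> t" using t(1) unfolding new_triangles_def by auto
  moreover have "t \<in> tri_after T F j" using created_triangle_survives[OF ij(1) _ t(1) between] ij by simp
  ultimately have "phi (F ! i) = eps (F ! j) \<or> share_triangle (tri_after T F j) (phi (F ! i)) (eps (F ! j))"
    unfolding share_triangle_def using t(2) by blast
  moreover have "\<not> (\<exists>p. i < p \<and> p < j \<and> eps (F ! p) = phi (F ! i))" using between phi_t by auto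
  ultimately show ?thesis unfolding adj_def using ij by blast
qed

definition swap_adjacent :: "nat \<Rightarrow> 'a list \<Rightarrow> 'a list" where
  "swap_adjacent k xs = xs[k := xs ! Suc k, Suc k := xs ! k]"

lemma length_swap_adjacent [simp]: "length (swap_adjacent k xs) = length xs"
  unfolding swap_adjacent_def by simp

lemma nth_swap_adjacent:
  "Suc k < length xs \<Longrightarrow> i < length xs \<Longrightarrow> swap_adjacent k xs ! i = xs ! Transposition.transpose k (Suc k) i"
  unfolding swap_adjacent_def Transposition.transpose_def by (auto simp: nth_list_update)

lemma map_swap_adjacent: "Suc k < length xs \<Longrightarrow> map f (swap_adjacent k xs) = swap_adjacent k (map f xs)"
  unfolding swap_adjacent_def by (simp add: map_update)

lemma mset_swap_adjacent: "Suc k < length xs \<Longrightarrow> mset (swap_adjacent k xs) = mset xs"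
  unfolding swap_adjacent_def by (simp add: mset_swap)

lemma swap_adjacent_lenlex:
  fixes xs :: "nat list"
  assumes k: "Suc k < length xs" and less: "xs ! Suc k < xs ! k"
  shows "(swap_adjacent k xs, xs) \<in> lenlex less_than"
proof -
  let ?rest = "drop (Suc (Suc k)) xs"
  have xs_eq: "take k xs @ xs ! k # xs ! Suc k # ?rest = xs"
    using k by (metis Cons_nth_drop_Suc Suc_lessD append_take_drop_id)
  have swap_eq: "take k xs @ xs ! Suc k # xs ! k # ?rest = swap_adjacent k xs"
    using k by (intro nth_equalityI)
      (auto simp: nth_swap_adjacent nth_append nth_Cons' Transposition.transpose_def numeral_2_eq_2 Suc_diff_Suc)
  have "(xs ! Suc k # xs ! k # ?rest, xs ! k # xs ! Suc k # ?rest) \<in> lex less_than"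
    using less by simp
  then have "(take k xs @ xs ! Suc k # xs ! k # ?rest, take k xs @ xs ! k # xs ! Suc k # ?rest) \<in> lex less_than"
    by (rule lex_append_leftI)
  then have "(swap_adjacent k xs, xs) \<in> lex less_than" by (simp only: xs_eq swap_eq)
  then show ?thesis by (simp add: lenlex_conv)
qed

lemma tri_after_swap_adjacent_le:
  assumes "Suc k < length G" "i \<le> k"
  shows "tri_after T (swap_adjacent k G) i = tri_after T G i"
  using assms(2)
proof (induction i)
  case (Suc i)
  then have "i < length G" "swap_adjacent k G ! i = G ! i"
    using assms(1) by (auto simp: nth_swap_adjacent)
  then show ?case using Suc tri_after_Suc[of i] by simp
qed simp

lemma tri_after_swap_adjacent_Suc:
  assumes "Suc k < length G"
  shows "tri_after T (swap_adjacent k G) (Suc k) = perform (tri_after T G k) (G ! Suc k)"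
  using assms tri_after_swap_adjacent_le[OF assms, of k] tri_after_Suc[of k "swap_adjacent k G"]
  by (simp add: nth_swap_adjacent)

lemma tri_after_swap_adjacent:
  assumes k: "Suc k < length G"
    and comm: "perform (perform (tri_after T G k) (G ! Suc k)) (G ! k)
             = perform (perform (tri_after T G k) (G ! k)) (G ! Suc k)"
    and i: "i \<le> length G" "i \<noteq> Suc k"
  shows "tri_after T (swap_adjacent k G) i = tri_after T G i"
proof (cases "i \<le> k")
  case True
  then show ?thesis using tri_after_swap_adjacent_le[OF k] by blast
next
  case False
  then have "Suc (Suc k) \<le> i" using i(2) by simp
  then show ?thesis
  proof (induction i rule: dec_induct)
    case base
    have "tri_after T (swap_adjacent k G) (Suc (Suc k))
        = perform (perform (tri_after T G k) (G ! Suc k)) (G ! k)"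
      using tri_after_swap_adjacent_Suc[OF k] tri_after_Suc[of "Suc k" "swap_adjacent k G"] k
      by (simp add: nth_swap_adjacent)
    also have "\<dots> = tri_after T G (Suc (Suc k))" using comm k tri_after_Suc[of _ G] by simp
    finally show ?case .
  next
    case (step n)
    then have "n < length G" "swap_adjacent k G ! n = G ! n" using i(1) k
      by (auto simp: nth_swap_adjacent)
    then show ?case using step tri_after_Suc[of n] by simp
  qed
qed

lemma commuting_flips_adjacent:
  assumes v: "valid_seq P T G" and k: "Suc k < length G"
    and indep: "\<not> creates_triangle_for G k (Suc k)"
  shows "commuting_flips P (tri_after T G k) (G ! k) (G ! Suc k)"
proof
  have k': "k < length G" using k by simp
  show "triangulation P (tri_after T G k)" "admissible (tri_after T G k) (G ! k)"
    using valid_seq_triangulation[OF v] valid_seq_admissible[OF v k'] k by auto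
  show "triangulation P (perform (tri_after T G k) (G ! k))"
    "admissible (perform (tri_after T G k) (G ! k)) (G ! Suc k)"
    "triangulation P (perform (perform (tri_after T G k) (G ! k)) (G ! Suc k))"
    using valid_seq_triangulation[OF v, of "Suc k"] valid_seq_triangulation[OF v, of "Suc (Suc k)"]
      valid_seq_admissible[OF v k] tri_after_Suc[OF k'] tri_after_Suc[OF k] k by auto
  show "\<forall>u\<in>new_triangles (G ! k). \<not> eps (G ! Suc k) \<subseteq> u"
    using indep k unfolding creates_triangle_for_def by auto
qed

lemma valid_seq_swap_adjacent:
  assumes v: "valid_seq P T G" and k: "Suc k < length G"
    and indep: "\<not> creates_triangle_for G k (Suc k)"
  shows "valid_seq P T (swap_adjacent k G)"
    and "tri_after T (swap_adjacent k G) (length G) = tri_after T G (length G)"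
proof -
  interpret commuting_flips P "tri_after T G k" "G ! k" "G ! Suc k"
    by (rule commuting_flips_adjacent[OF assms])
  have k': "k < length G" using k by simp
  have same: "tri_after T (swap_adjacent k G) i = tri_after T G i"
    if "i \<le> length G" "i \<noteq> Suc k" for i
    using tri_after_swap_adjacent[OF k perform_commute that] .
  have mid: "tri_after T (swap_adjacent k G) (Suc k) = perform (tri_after T G k) (G ! Suc k)"
    using tri_after_swap_adjacent_Suc[OF k] .
  show "tri_after T (swap_adjacent k G) (length G) = tri_after T G (length G)"
    using same k by simp
  show "valid_seq P T (swap_adjacent k G)"
    unfolding valid_seq_def
  proof (intro conjI allI impI)
    show "triangulation P T" using v unfolding valid_seq_def by blast
    fix i assume "i < length (swap_adjacent k G)"
    then have i: "i < length G" by simp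
    have nth: "swap_adjacent k G ! i = G ! Transposition.transpose k (Suc k) i"
      using nth_swap_adjacent[OF k i] .
    consider "i = k" | "i = Suc k" | "i \<noteq> k" "i \<noteq> Suc k" by blast
    then show "admissible (tri_after T (swap_adjacent k G) i) (swap_adjacent k G ! i)"
    proof cases
      case 1
      then show ?thesis using admissible_y same[of k] nth k by simp
    next
      case 2
      then show ?thesis using admissible_x_after_y mid nth by simp
    next
      case 3
      then show ?thesis using same[of i] nth i valid_seq_admissible[OF v i] by simp
    qed
    show "triangulation P (tri_after T (swap_adjacent k G) (Suc i))"
      using mid triangulation_y same[of "Suc i"] valid_seq_triangulation[OF v, of "Suc i"] i
      by (cases "i = k") auto
  qed
qed

lemma creates_triangle_for_swap_adjacent:
  assumes v: "valid_seq P T G" and k: "Suc k < length G"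
    and indep: "\<not> creates_triangle_for G k (Suc k)"
    and l: "creates_triangle_for (swap_adjacent k G) i j"
  shows "creates_triangle_for G (Transposition.transpose k (Suc k) i) (Transposition.transpose k (Suc k) j)"
proof -
  interpret commuting_flips P "tri_after T G k" "G ! k" "G ! Suc k"
    by (rule commuting_flips_adjacent[OF v k indep])
  let ?\<tau> = "Transposition.transpose k (Suc k)"
  from l obtain t where ij: "i < j" "j < length G"
      and t: "t \<in> new_triangles (G ! ?\<tau> i)" "eps (G ! ?\<tau> j) \<subseteq> t"
      and between: "\<And>p. i < p \<Longrightarrow> p < j \<Longrightarrow> \<not> eps (G ! ?\<tau> p) \<subseteq> t"
    unfolding creates_triangle_for_def using k by (auto simp: nth_swap_adjacent)
  have "?\<tau> i < ?\<tau> j"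
  proof (rule ccontr)
    assume "\<not> ?\<tau> i < ?\<tau> j"
    then have "i = k" "j = Suc k" using ij unfolding Transposition.transpose_def by (auto split: if_splits)
    then show False using t new_triangles_y_avoid_eps_x by simp
  qed
  moreover have "\<not> eps (G ! p) \<subseteq> t" if p: "?\<tau> i < p" "p < ?\<tau> j" for p
  proof -
    have "(i < ?\<tau> p \<and> ?\<tau> p < j) \<or> (p = Suc k \<and> i = Suc k) \<or> (p = k \<and> j = k)"
      using p ij unfolding Transposition.transpose_def by (auto split: if_splits)
    then consider "i < ?\<tau> p" "?\<tau> p < j" | "p = Suc k" "i = Suc k" | "p = k" "j = k" by blast
    then show ?thesis
    proof cases
      case 1
      then show ?thesis using between[of "?\<tau> p"] by simp
    next
      case 2
      then show ?thesis using independent t(1) by simp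
    next
      case 3
      \<comment> \<open>\<open>t\<close> survives until step \<open>k\<close>, where it would contain the edges of both flips\<close>
      have "\<forall>q. i < q \<and> q < k \<longrightarrow> \<not> eps (G ! q) \<subseteq> t"
        using between 3 unfolding Transposition.transpose_def by fastforce
      then have "t \<in> tri_after T G k"
        using created_triangle_survives[of i k G t T] ij t(1) 3 k
        unfolding Transposition.transpose_def by (auto split: if_splits)
      then show ?thesis using no_triangle_on_both_edges t(2) 3 by auto
    qed
  qed
  moreover have "?\<tau> j < length G" using ij k unfolding Transposition.transpose_def by auto
  ultimately show ?thesis unfolding creates_triangle_for_def using t by blast
qed

lemma sort_by_adjacent_swaps:
  fixes key :: "'a \<Rightarrow> nat"
  assumes "good xs"
    and swap: "\<And>ys k. good ys \<Longrightarrow> mset ys = mset xs \<Longrightarrow> Suc k < length ys \<Longrightarrow>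
                 key (ys ! Suc k) < key (ys ! k) \<Longrightarrow> good (swap_adjacent k ys)"
  obtains ys where "good ys" "mset ys = mset xs" "sorted (map key ys)"
proof -
  \<comment> \<open>each swap makes the key sequence lexicographically smaller\<close>
  have "\<exists>ys. good ys \<and> mset ys = mset xs \<and> sorted (map key ys)"
    if "good zs" "mset zs = mset xs" for zs
    using that
  proof (induction "map key zs" arbitrary: zs rule: wf_induct[OF wf_lenlex[OF wf_less_than]])
    case (1 zs)
    show ?case
    proof (cases "sorted (map key zs)")
      case False
      then obtain k where k: "Suc k < length zs" "key (zs ! Suc k) < key (zs ! k)"
        by (auto simp: sorted_iff_nth_Suc not_le)
      have "(map key (swap_adjacent k zs), map key zs) \<in> lenlex less_than"
        using swap_adjacent_lenlex[of k "map key zs"] k by (simp add: map_swap_adjacent)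
      then show ?thesis
        using 1 swap[OF "1.prems" k] mset_swap_adjacent[OF k(1)] by metis
    qed (use 1 in blast)
  qed
  then show ?thesis using assms(1) that by blast
qed

lemma swap_adjacent_preserves_order:
  fixes fl :: "'a \<Rightarrow> flip" and key :: "'a \<Rightarrow> nat"
  assumes v: "valid_seq P T (map fl ys)"
    and dep: "\<forall>i j. creates_triangle_for (map fl ys) i j \<longrightarrow> key (ys ! i) = key (ys ! j)"
    and k: "Suc k < length ys" and less: "key (ys ! Suc k) < key (ys ! k)"
  shows "valid_seq P T (map fl (swap_adjacent k ys))"
    and "tri_after T (map fl (swap_adjacent k ys)) (length ys) = tri_after T (map fl ys) (length ys)"
    and "\<forall>i j. creates_triangle_for (map fl (swap_adjacent k ys)) i j \<longrightarrow>
           key (swap_adjacent k ys ! i) = key (swap_adjacent k ys ! j)"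
proof -
  have k': "Suc k < length (map fl ys)" using k by simp
  have indep: "\<not> creates_triangle_for (map fl ys) k (Suc k)" using dep less by auto
  note map_eq = map_swap_adjacent[OF k]
  show "valid_seq P T (map fl (swap_adjacent k ys))"
    "tri_after T (map fl (swap_adjacent k ys)) (length ys) = tri_after T (map fl ys) (length ys)"
    using valid_seq_swap_adjacent[OF v k' indep] unfolding map_eq by simp_all
  show "\<forall>i j. creates_triangle_for (map fl (swap_adjacent k ys)) i j \<longrightarrow>
      key (swap_adjacent k ys ! i) = key (swap_adjacent k ys ! j)"
  proof (intro allI impI)
    fix i j assume "creates_triangle_for (map fl (swap_adjacent k ys)) i j"
    then have "creates_triangle_for (map fl ys) (Transposition.transpose k (Suc k) i)
        (Transposition.transpose k (Suc k) j)" and "i < length ys" "j < length ys"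
      using creates_triangle_for_swap_adjacent[OF v k' indep] unfolding map_eq creates_triangle_for_def
      by auto
    then show "key (swap_adjacent k ys ! i) = key (swap_adjacent k ys ! j)"
      using dep k by (simp add: nth_swap_adjacent)
  qed
qed

definition block_index :: "'a set list \<Rightarrow> 'a \<Rightarrow> nat" where
  "block_index Cs x = (THE i. i < length Cs \<and> x \<in> Cs ! i)"

locale class_list =
  fixes A :: "'a set" and R :: "'a rel" and Cs :: "'a set list"
  assumes sym: "sym R" and distinct: "distinct Cs" and classes: "set Cs = A // R\<^sup>*"
begin

lemma class_nth: "i < length Cs \<Longrightarrow> \<exists>a. Cs ! i = R\<^sup>* `` {a}"
  using classes nth_mem unfolding quotient_def by blast

lemma block_index_eqI:
  assumes i: "i < length Cs" "x \<in> Cs ! i"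
  shows "block_index Cs x = i"
  unfolding block_index_def
proof (rule the_equality)
  fix i' assume i': "i' < length Cs \<and> x \<in> Cs ! i'"
  obtain a a' where a: "Cs ! i = R\<^sup>* `` {a}" "Cs ! i' = R\<^sup>* `` {a'}"
    using class_nth i i' by blast
  have "(a, x) \<in> R\<^sup>*" "(x, a') \<in> R\<^sup>*"
    using a i i' sym_rtrancl[OF sym] by (auto dest: symD)
  then have "(a, a') \<in> R\<^sup>*" by (rule rtrancl_trans)
  then have "(a', a) \<in> R\<^sup>*" by (rule symD[OF sym_rtrancl[OF sym]])
  with \<open>(a, a') \<in> R\<^sup>*\<close> have "Cs ! i' = Cs ! i" unfolding a by (blast intro: rtrancl_trans)
  then show "i' = i" using distinct i(1) i' nth_eq_iff_index_eq by blast
qed (use i in simp)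

lemma block_index_mem:
  assumes "x \<in> A"
  shows "block_index Cs x < length Cs" "x \<in> Cs ! block_index Cs x"
proof -
  have "R\<^sup>* `` {x} \<in> set Cs" using assms classes by (simp add: quotientI)
  then obtain i where "i < length Cs" "Cs ! i = R\<^sup>* `` {x}" by (metis in_set_conv_nth)
  then show "block_index Cs x < length Cs" "x \<in> Cs ! block_index Cs x"
    using block_index_eqI by auto
qed

lemma block_index_rel:
  assumes xy: "(x, y) \<in> R" and x: "x \<in> A"
  shows "block_index Cs x = block_index Cs y"
proof -
  obtain a where a: "Cs ! block_index Cs x = R\<^sup>* `` {a}"
    using class_nth block_index_mem(1)[OF x] by blast
  then have "(a, y) \<in> R\<^sup>*" using block_index_mem(2)[OF x] xy by auto
  then have "y \<in> Cs ! block_index Cs x" using a by simp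
  then show ?thesis using block_index_eqI[OF block_index_mem(1)[OF x]] by simp
qed

lemma sorted_block_index_nth_less:
  assumes sorted: "sorted (map (block_index Cs) ys)" and k: "k1 < length ys" "k2 < length ys"
    and ts: "t < s" "s < length Cs" and mem: "ys ! k1 \<in> Cs ! t" "ys ! k2 \<in> Cs ! s"
  shows "k1 < k2"
proof (rule ccontr)
  assume "\<not> k1 < k2"
  then have "block_index Cs (ys ! k2) \<le> block_index Cs (ys ! k1)"
    using sorted_nth_mono[OF sorted, of k2 k1] k by simp
  moreover have "block_index Cs (ys ! k1) = t" "block_index Cs (ys ! k2) = s"
    using block_index_eqI ts mem by simp_all
  ultimately show False using ts by simp
qed

end

lemma DF_components_class_list:
  assumes "distinct Cs" "set Cs = DF_components T F"
  shows "class_list {..<length F} (DF_arcs T F \<union> (DF_arcs T F)\<inverse>) Cs"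
  using assms sym_Un_converse unfolding DF_components_def by unfold_locales auto

lemma block_sorted_reordering:
  assumes v: "valid_seq P T F"
    and cl: "class_list {..<length F} (DF_arcs T F \<union> (DF_arcs T F)\<inverse>) Cs"
  obtains ys where "mset ys = mset [0..<length F]" "valid_seq P T (map ((!) F) ys)"
    "tri_after T (map ((!) F) ys) (length F) = tri_after T F (length F)"
    "sorted (map (block_index Cs) ys)"
proof -
  let ?n = "length F" and ?key = "block_index Cs"
  let ?good = "\<lambda>ys. valid_seq P T (map ((!) F) ys) \<and>
     tri_after T (map ((!) F) ys) ?n = tri_after T F ?n \<and>
     (\<forall>i j. creates_triangle_for (map ((!) F) ys) i j \<longrightarrow> ?key (ys ! i) = ?key (ys ! j))"
  have good0: "?good [0..<?n]"
  proof -
    have "?key ([0..<?n] ! i) = ?key ([0..<?n] ! j)" if "creates_triangle_for F i j" for i j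
      using class_list.block_index_rel[OF cl] creates_triangle_for_imp_adj[OF v that] that
      unfolding DF_arcs_def creates_triangle_for_def by auto
    then show ?thesis using v by (simp add: map_nth)
  qed
  show ?thesis
  proof (rule sort_by_adjacent_swaps[where good = ?good and key = ?key, OF good0])
    fix zs k assume zs: "?good zs" "mset zs = mset [0..<?n]" "Suc k < length zs"
      "?key (zs ! Suc k) < ?key (zs ! k)"
    then have "length zs = ?n" by (metis length_upt minus_nat.diff_0 mset_eq_length)
    moreover note swapped = swap_adjacent_preserves_order[where fl = "(!) F",
        OF zs(1)[THEN conjunct1] zs(1)[THEN conjunct2, THEN conjunct2] zs(3,4)]
    ultimately show "?good (swap_adjacent k zs)" using zs(1) by simp
  qed (use that in blast)
qed

theorem corollary1:
  fixes P :: "pt set" and T :: "triangle set" and F :: "flip list" and Cs :: "nat set list"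
  assumes "valid_seq P T F"
    and "distinct Cs" and "set Cs = DF_components T F"
  shows "\<exists>\<sigma>. bij_betw \<sigma> {..<length F} {..<length F} \<and>
           (let G = map (\<lambda>k. F ! \<sigma> k) [0..<length F] in
              valid_seq P T G \<and> tri_after T G (length G) = tri_after T F (length F)) \<and>
           (\<forall>k1<length F. \<forall>k2<length F. \<forall>t s. t < s \<and> s < length Cs \<and>
               \<sigma> k1 \<in> Cs ! t \<and> \<sigma> k2 \<in> Cs ! s \<longrightarrow> k1 < k2)"
proof -
  let ?n = "length F"
  interpret class_list "{..<?n}" "DF_arcs T F \<union> (DF_arcs T F)\<inverse>" Cs
    using DF_components_class_list[OF assms(2,3)] .
  obtain ys where ys: "mset ys = mset [0..<?n]" "valid_seq P T (map ((!) F) ys)"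
      "tri_after T (map ((!) F) ys) ?n = tri_after T F ?n" "sorted (map (block_index Cs) ys)"
    using block_sorted_reordering[OF assms(1) class_list_axioms] by blast
  have ys_set: "distinct ys" "set ys = {..<?n}" "length ys = ?n"
    using mset_eq_imp_distinct_iff[OF ys(1)] mset_eq_setD[OF ys(1)] mset_eq_length[OF ys(1)]
    by (simp_all add: atLeast0LessThan)
  have "map (\<lambda>k. F ! (ys ! k)) [0..<?n] = map ((!) F) ys"
    using ys_set(3) by (intro nth_equalityI) auto
  then have "let G = map (\<lambda>k. F ! (ys ! k)) [0..<?n] in
      valid_seq P T G \<and> tri_after T G (length G) = tri_after T F ?n"
    using ys(2,3) ys_set(3) by simp
  moreover have "bij_betw ((!) ys) {..<?n} {..<?n}"
    using bij_betw_nth[OF ys_set(1)] ys_set by simp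
  moreover have "\<forall>k1<?n. \<forall>k2<?n. \<forall>t s. t < s \<and> s < length Cs \<and>
      ys ! k1 \<in> Cs ! t \<and> ys ! k2 \<in> Cs ! s \<longrightarrow> k1 < k2"
    using sorted_block_index_nth_less[OF ys(4)] unfolding ys_set(3) by blast
  ultimately show ?thesis by (intro exI[of _ "(!) ys"]) blast
qed

end
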